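(* Fix $n$, generators $x_{i_1},\dots,x_{i_k}\in\mathcal{B}_n$, an index $j$, integers $a_h$ ($h\ne j$), and set $V(e)=V_n(x_{i_1}^{a_1}\cdots x_{i_j}^{e}\cdots x_{i_k}^{a_k})$ for $e\in\mathbb{Z}$. (a) If $V(e)$ and $V(e+1)$ are polynomials in $s$ and $k\ge2$, then $V(e+k)$ is a polynomial in $s$ different from $1$. (b) If $V(e)$ and $V(e-1)$ are polynomials in $s^{-1}$ and $k\ge2$, then $V(e-k)$ is a polynomial in $s^{-1}$ different from $1$.
   Context: $\mathcal{B}_n$ is the Artin braid group with generators $x_1,\dots,x_{n-1}$; $V_n(\beta)$ is the Jones polynomial of the closure of $\beta$, normalized by $V(\text{unknot})=1$ and $q^{-1}V_{L_+}-qV_{L_-}=(q^{1/2}-q^{-1/2})V_{L_0}$, as a Laurent polynomial in $s=q^{-1/2}$. Conventions: closures of $\alpha x_i^{e+2}\gamma$, $\alpha x_i^{e+1}\gamma$, $\alpha x_i^{e}\gamma$ play the roles of $L_-,L_0,L_+$ (e.g. the closure of $x_1^2\in\mathcal B_2$ has Jones polynomial $-s-s^5$). In (a) and (b), $k$ denotes an integer step (not the number of factors). *)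

theory Defs
  imports "HOL-Computational_Algebra.Formal_Laurent_Series"
begin

text \<open>Braid words.  A letter (i, True) is the Artin generator x_i, a letter (i, False)
  is its inverse.  Strands are numbered 1..n.\<close>

type_synonym braid_word = "(nat \<times> bool) list"

definition gen_power :: "nat \<Rightarrow> int \<Rightarrow> braid_word" where
  "gen_power i e = (if e \<ge> 0 then replicate (nat e) (i, True) else replicate (nat (- e)) (i, False))"

definition word_of_powers :: "nat \<Rightarrow> (nat \<Rightarrow> nat) \<Rightarrow> (nat \<Rightarrow> int) \<Rightarrow> braid_word" where
  "word_of_powers m i ex = concat (map (\<lambda>h. gen_power (i h) (ex h)) [0..<m])"

text \<open>Kauffman states of the closure of a braid word w: a set S of positions of letters
  that receive the horizontal (cup-cap, e_i) smoothing; the others receive the vertical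
  (identity) smoothing.  The smoothed closed diagram is encoded as a graph on the points
  (t, p), t = 0..length w (level t lies just below letter t), p = 1..n; level length w is
  glued to level 0 (braid closure).\<close>

definition smoothing_edges :: "nat \<Rightarrow> braid_word \<Rightarrow> nat set \<Rightarrow> ((nat \<times> nat) \<times> (nat \<times> nat)) set" where
  "smoothing_edges n w S =
     {((length w, p), (0, p)) | p. 1 \<le> p \<and> p \<le> n}
   \<union> {((t, p), (Suc t, p)) | t p. t < length w \<and> 1 \<le> p \<and> p \<le> n \<and>
          (t \<notin> S \<or> (p \<noteq> fst (w ! t) \<and> p \<noteq> Suc (fst (w ! t))))}
   \<union> {((t, fst (w ! t)), (t, Suc (fst (w ! t)))) | t. t < length w \<and> t \<in> S}
   \<union> {((Suc t, fst (w ! t)), (Suc t, Suc (fst (w ! t)))) | t. t < length w \<and> t \<in> S}"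

definition state_points :: "nat \<Rightarrow> braid_word \<Rightarrow> (nat \<times> nat) set" where
  "state_points n w = {0..length w} \<times> {1..n}"

definition state_loops :: "nat \<Rightarrow> braid_word \<Rightarrow> nat set \<Rightarrow> nat" where
  "state_loops n w S =
     card (state_points n w // ((smoothing_edges n w S \<union> (smoothing_edges n w S)\<inverse>)\<^sup>*))"

text \<open>Writhe: with the paper's conventions (closure of x_1^2 in B_2 has Jones polynomial
  -s-s^5), the generator x_i is a negative crossing.\<close>
definition writhe :: "braid_word \<Rightarrow> int" where
  "writhe w = (\<Sum>t<length w. if snd (w ! t) then -1 else 1)"

text \<open>Kauffman bracket exponent a(S) - b(S): bracket of x_i is A^{-1}(id) + A(e_i),
  bracket of x_i^{-1} is A(id) + A^{-1}(e_i).\<close>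
definition state_A_exp :: "braid_word \<Rightarrow> nat set \<Rightarrow> int" where
  "state_A_exp w S = (\<Sum>t<length w. (if t \<in> S then 1 else -1) * (if snd (w ! t) then 1 else -1))"

text \<open>Jones polynomial of the closure of w in B_n, as a Laurent polynomial in s = q^{-1/2}
  (an element of int fls whose variable fls_X is s).  It is
  (-A^3)^{-writhe} * sum_S A^{a(S)-b(S)} (-A^2-A^{-2})^{loops(S)-1} with A^2 = s;
  the total A-exponent a(S)-b(S)-3 writhe is always even, so the division by 2 is exact.\<close>
definition jones :: "nat \<Rightarrow> braid_word \<Rightarrow> int fls" where
  "jones n w = (\<Sum>S\<in>Pow {..<length w}.
      (-1) ^ nat \<bar>writhe w\<bar>
      * fls_X_intpow ((state_A_exp w S - 3 * writhe w) div 2)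
      * (- fls_X - fls_X_inv) ^ (state_loops n w S - 1))"

definition is_poly_in_s :: "int fls \<Rightarrow> bool" where
  "is_poly_in_s f \<longleftrightarrow> (\<forall>d < 0. fls_nth f d = 0)"

definition is_poly_in_s_inv :: "int fls \<Rightarrow> bool" where
  "is_poly_in_s_inv f \<longleftrightarrow> (\<forall>d > 0. fls_nth f d = 0)"

end

theory Submission
  imports Defs
begin

text \<open>Write \<open>J(w)\<close> for the state sum of the closure of \<open>w\<close>.  Expanding one letter
  \<open>x_i^c\<close> (\<open>c = \<plusminus>1\<close>) gives \<open>J(u x_i^c v) = s^c J(u v) + s^(2c) E(u, v)\<close>, where \<open>E\<close> collects
  the states smoothing that letter horizontally.  A horizontal smoothing next to another
  horizontally smoothed \<open>x_i\<close> closes off a small loop, which yields the kink rule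
  \<open>E(u x_i^c, v) = -s^(3c) E(u, v)\<close>.  Eliminating \<open>E\<close> gives the recurrence
  \<open>V(e+2) = s^4 V(e) + (s^3 - s) V(e+1)\<close>.  Its coefficients only raise degrees, so polynomiality
  in \<open>s\<close> propagates upwards from two consecutive exponents, and for \<open>k \<ge> 2\<close> the constant term of
  \<open>V(e+k)\<close> vanishes, so \<open>V(e+k) \<noteq> 1\<close>.  Read backwards, the recurrence expresses \<open>V(e-2)\<close>
  through \<open>V(e)\<close> and \<open>V(e-1)\<close> with coefficients \<open>s^-4\<close> and \<open>s^-3 - s^-1\<close>, which gives (b).

  The loop counts behind the two rules come from collapsing the graph of the smoothed closure onto
  a smaller one: a vertically smoothed letter merges two adjacent levels, and the small loop of a
  kink becomes a single isolated point.\<close>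

section \<open>Connected components under a collapsing map\<close>

lemma rtrancl_sym_map:
  assumes edge_map: "\<And>a b. (a, b) \<in> E \<Longrightarrow> \<phi> a = \<phi> b \<or> (\<phi> a, \<phi> b) \<in> F"
    and path: "(a, b) \<in> (E \<union> E\<inverse>)\<^sup>*"
  shows "(\<phi> a, \<phi> b) \<in> (F \<union> F\<inverse>)\<^sup>*"
  using path
proof (induction rule: rtrancl_induct)
  case (step y z)
  have "(\<phi> y, \<phi> z) \<in> (F \<union> F\<inverse>)\<^sup>*"
    using step.hyps(2) edge_map[of y z] edge_map[of z y] by auto
  with step.IH show ?case by (rule rtrancl_trans)
qed simp

lemma rtrancl_sym_lift:
  assumes closed: "E \<subseteq> A \<times> A"
    and edge_lift: "\<And>c d. (c, d) \<in> F \<Longrightarrow> \<exists>a b. (a, b) \<in> E \<and> \<phi> a = c \<and> \<phi> b = d"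
    and fibres: "\<And>a b. a \<in> A \<Longrightarrow> b \<in> A \<Longrightarrow> \<phi> a = \<phi> b \<Longrightarrow> (a, b) \<in> (E \<union> E\<inverse>)\<^sup>*"
    and path: "(\<phi> a, \<phi> b) \<in> (F \<union> F\<inverse>)\<^sup>*" and a: "a \<in> A" and b: "b \<in> A"
  shows "(a, b) \<in> (E \<union> E\<inverse>)\<^sup>*"
proof -
  have "\<exists>b'\<in>A. \<phi> b' = c \<and> (a, b') \<in> (E \<union> E\<inverse>)\<^sup>*" if "(\<phi> a, c) \<in> (F \<union> F\<inverse>)\<^sup>*" for c
    using that
  proof (induction rule: rtrancl_induct)
    case base
    show ?case using a by blast
  next
    case (step y z)
    then obtain b' where b': "b' \<in> A" "\<phi> b' = y" "(a, b') \<in> (E \<union> E\<inverse>)\<^sup>*"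
      by blast
    from step.hyps(2) edge_lift obtain y' z' where
      "(y', z') \<in> E \<union> E\<inverse>" "\<phi> y' = y" "\<phi> z' = z"
      by (metis UnE UnI1 UnI2 converseD converseI)
    moreover from this(1) closed have "y' \<in> A" "z' \<in> A" by auto
    ultimately have "(a, z') \<in> (E \<union> E\<inverse>)\<^sup>*"
      using b' fibres[of b' y'] by (meson r_into_rtrancl rtrancl_trans)
    with \<open>z' \<in> A\<close> \<open>\<phi> z' = z\<close> show ?case by blast
  qed
  then obtain b' where "b' \<in> A" "\<phi> b' = \<phi> b" "(a, b') \<in> (E \<union> E\<inverse>)\<^sup>*"
    using path by blast
  then show ?thesis using fibres b by (meson rtrancl_trans)
qed

lemma card_image_eq_if_same_kernel:
  assumes "\<And>x y. x \<in> A \<Longrightarrow> y \<in> A \<Longrightarrow> f x = f y \<longleftrightarrow> g x = g y"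
  shows "card (f ` A) = card (g ` A)"
proof -
  let ?h = "\<lambda>y. g (inv_into A f y)"
  have h: "?h (f x) = g x" if "x \<in> A" for x
    using assms that by (meson f_inv_into_f image_eqI inv_into_into)
  have "inj_on ?h (f ` A)"
    by (rule inj_onI) (use assms h in auto)
  moreover have "?h ` f ` A = g ` A"
    using h by (auto simp: image_image)
  ultimately show ?thesis by (metis card_image)
qed

lemma card_components_eq_if_collapse:
  assumes onto: "\<phi> ` A = B"
    and closed: "E \<subseteq> A \<times> A"
    and edge_map: "\<And>a b. (a, b) \<in> E \<Longrightarrow> \<phi> a = \<phi> b \<or> (\<phi> a, \<phi> b) \<in> F"
    and edge_lift: "\<And>c d. (c, d) \<in> F \<Longrightarrow> \<exists>a b. (a, b) \<in> E \<and> \<phi> a = c \<and> \<phi> b = d"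
    and fibres: "\<And>a b. a \<in> A \<Longrightarrow> b \<in> A \<Longrightarrow> \<phi> a = \<phi> b \<Longrightarrow> (a, b) \<in> (E \<union> E\<inverse>)\<^sup>*"
  shows "card (A // (E \<union> E\<inverse>)\<^sup>*) = card (B // (F \<union> F\<inverse>)\<^sup>*)"
proof -
  let ?R = "(E \<union> E\<inverse>)\<^sup>*" and ?S = "(F \<union> F\<inverse>)\<^sup>*"
  have equiv: "equiv UNIV ?R" "equiv UNIV ?S"
    by (simp_all add: equiv_def refl_rtrancl sym_rtrancl sym_Un_converse trans_rtrancl)
  have "(a, b) \<in> ?R \<longleftrightarrow> (\<phi> a, \<phi> b) \<in> ?S" if "a \<in> A" "b \<in> A" for a b
  proof
    show "(a, b) \<in> ?R \<Longrightarrow> (\<phi> a, \<phi> b) \<in> ?S"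
      using edge_map by (rule rtrancl_sym_map)
    show "(\<phi> a, \<phi> b) \<in> ?S \<Longrightarrow> (a, b) \<in> ?R"
      using closed edge_lift fibres _ that by (rule rtrancl_sym_lift)
  qed
  then have "?R `` {a} = ?R `` {b} \<longleftrightarrow> ?S `` {\<phi> a} = ?S `` {\<phi> b}" if "a \<in> A" "b \<in> A" for a b
    using that by (simp add: equiv_class_eq_iff[OF equiv(1)] equiv_class_eq_iff[OF equiv(2)])
  then have "card ((\<lambda>a. ?R `` {a}) ` A) = card ((\<lambda>a. ?S `` {\<phi> a}) ` A)"
    by (rule card_image_eq_if_same_kernel)
  moreover have "A // ?R = (\<lambda>a. ?R `` {a}) ` A" "B // ?S = (\<lambda>a. ?S `` {\<phi> a}) ` A"
    using onto by (auto simp: quotient_def)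
  ultimately show ?thesis by simp
qed

lemma card_components_insert_isolated:
  assumes "finite A" "z \<notin> A" "\<And>c d. (c, d) \<in> E \<Longrightarrow> c \<noteq> z \<and> d \<noteq> z"
  shows "card (insert z A // (E \<union> E\<inverse>)\<^sup>*) = Suc (card (A // (E \<union> E\<inverse>)\<^sup>*))"
proof -
  let ?R = "(E \<union> E\<inverse>)\<^sup>*"
  have "x = z" if "(z, x) \<in> ?R" for x
    using that by (induction rule: rtrancl_induct) (use assms(3) in auto)
  then have "?R `` {z} = {z}"
    by auto
  then have "insert z A // ?R = insert {z} (A // ?R)" and "{z} \<notin> A // ?R"
    using assms(2) by (auto simp: quotient_def)
  moreover have "finite (A // ?R)"
    using assms(1) by (simp add: quotient_def)
  ultimately show ?thesis by simp
qed

section \<open>Loops of a smoothed braid closure\<close>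

text \<open>The smoothing of the closure of a word of length \<open>N\<close> only depends on
  \<open>f t = (i, h)\<close> for each letter \<open>t\<close>: the letter is \<open>x_i\<close> or its inverse, and \<open>h\<close> says whether it is
  smoothed horizontally.\<close>

definition closure_edges :: "nat \<Rightarrow> nat \<Rightarrow> (nat \<Rightarrow> nat \<times> bool) \<Rightarrow> ((nat \<times> nat) \<times> (nat \<times> nat)) set" where
  "closure_edges n N f =
     {((N, p), (0, p)) | p. 1 \<le> p \<and> p \<le> n}
   \<union> {((t, p), (Suc t, p)) | t p. t < N \<and> 1 \<le> p \<and> p \<le> n \<and>
          (\<not> snd (f t) \<or> (p \<noteq> fst (f t) \<and> p \<noteq> Suc (fst (f t))))}
   \<union> {((t, fst (f t)), (t, Suc (fst (f t)))) | t. t < N \<and> snd (f t)}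
   \<union> {((Suc t, fst (f t)), (Suc t, Suc (fst (f t)))) | t. t < N \<and> snd (f t)}"

definition closure_loops :: "nat \<Rightarrow> nat \<Rightarrow> (nat \<Rightarrow> nat \<times> bool) \<Rightarrow> nat" where
  "closure_loops n N f =
     card (({0..N} \<times> {1..n}) // (closure_edges n N f \<union> (closure_edges n N f)\<inverse>)\<^sup>*)"

lemma state_loops_eq_closure_loops:
  "state_loops n w S = closure_loops n (length w) (\<lambda>t. (fst (w ! t), t \<in> S))"
  unfolding state_loops_def closure_loops_def smoothing_edges_def closure_edges_def state_points_def
  by simp

lemma closure_edges_wrap: "1 \<le> p \<Longrightarrow> p \<le> n \<Longrightarrow> ((N, p), (0, p)) \<in> closure_edges n N f"
  and closure_edges_strand: "t < N \<Longrightarrow> 1 \<le> p \<Longrightarrow> p \<le> n \<Longrightarrow>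
      \<not> snd (f t) \<or> (p \<noteq> fst (f t) \<and> p \<noteq> Suc (fst (f t))) \<Longrightarrow>
      ((t, p), (Suc t, p)) \<in> closure_edges n N f"
  and closure_edges_below: "t < N \<Longrightarrow> snd (f t) \<Longrightarrow>
      ((t, fst (f t)), (t, Suc (fst (f t)))) \<in> closure_edges n N f"
  and closure_edges_above: "t < N \<Longrightarrow> snd (f t) \<Longrightarrow>
      ((Suc t, fst (f t)), (Suc t, Suc (fst (f t)))) \<in> closure_edges n N f"
  unfolding closure_edges_def by blast+

lemma closure_edgesE:
  assumes "(a, b) \<in> closure_edges n N f"
  obtains (wrap) p where "a = (N, p)" "b = (0, p)" "1 \<le> p" "p \<le> n"
  | (strand) t p where "a = (t, p)" "b = (Suc t, p)" "t < N" "1 \<le> p" "p \<le> n"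
      "\<not> snd (f t) \<or> (p \<noteq> fst (f t) \<and> p \<noteq> Suc (fst (f t)))"
  | (below) t where "a = (t, fst (f t))" "b = (t, Suc (fst (f t)))" "t < N" "snd (f t)"
  | (above) t where "a = (Suc t, fst (f t))" "b = (Suc t, Suc (fst (f t)))" "t < N" "snd (f t)"
  using assms unfolding closure_edges_def by blast

lemma closure_edges_subset:
  assumes "\<forall>t<N. 1 \<le> fst (f t) \<and> fst (f t) < n"
  shows "closure_edges n N f \<subseteq> ({0..N} \<times> {1..n}) \<times> ({0..N} \<times> {1..n})"
proof
  fix x assume "x \<in> closure_edges n N f"
  then obtain a b where "x = (a, b)" "(a, b) \<in> closure_edges n N f" by (cases x) auto
  from this(2) show "x \<in> ({0..N} \<times> {1..n}) \<times> ({0..N} \<times> {1..n})"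
    by (cases rule: closure_edgesE) (use assms \<open>x = (a, b)\<close> in auto)
qed

lemma closure_loops_cong: "(\<And>t. t < N \<Longrightarrow> f t = g t) \<Longrightarrow> closure_loops n N f = closure_loops n N g"
proof -
  assume "\<And>t. t < N \<Longrightarrow> f t = g t"
  then have "closure_edges n N f = closure_edges n N g"
    unfolding closure_edges_def by (auto 0 4)
  then show ?thesis by (simp add: closure_loops_def)
qed

lemma closure_loops_pos: "1 \<le> n \<Longrightarrow> 1 \<le> closure_loops n N f"
proof -
  assume "1 \<le> n"
  let ?R = "(closure_edges n N f \<union> (closure_edges n N f)\<inverse>)\<^sup>*"
  have "?R `` {(0, 1)} \<in> ({0..N} \<times> {1..n}) // ?R"
    using \<open>1 \<le> n\<close> by (intro quotientI) auto
  moreover have "finite (({0..N} \<times> {1..n}) // ?R)"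
    by (simp add: quotient_def)
  ultimately show ?thesis
    unfolding closure_loops_def by (metis One_nat_def Suc_leI card_gt_0_iff empty_iff)
qed

definition skip_letter :: "nat \<Rightarrow> (nat \<Rightarrow> 'a) \<Rightarrow> nat \<Rightarrow> 'a" where
  "skip_letter k f t = (if t < k then f t else f (Suc t))"

lemma skip_letter_pred: "k < t \<Longrightarrow> skip_letter k f (t - 1) = f t"
  by (cases t) (auto simp: skip_letter_def)

definition merge_levels :: "nat \<Rightarrow> nat \<times> nat \<Rightarrow> nat \<times> nat" where
  "merge_levels k x = (if fst x \<le> k then fst x else fst x - 1, snd x)"

lemma merge_levels_image:
  assumes "k \<le> N"
  shows "merge_levels k ` ({0..Suc N} \<times> {1..n}) = {0..N} \<times> {1..n}"
proof
  show "merge_levels k ` ({0..Suc N} \<times> {1..n}) \<subseteq> {0..N} \<times> {1..n}"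
    using assms by (auto simp: merge_levels_def)
  show "{0..N} \<times> {1..n} \<subseteq> merge_levels k ` ({0..Suc N} \<times> {1..n})"
  proof
    fix x assume x: "x \<in> {0..N} \<times> {1..n}"
    obtain t p where tp: "x = (t, p)" by fastforce
    have "x = merge_levels k (if t \<le> k then t else Suc t, p)"
      using tp by (simp add: merge_levels_def)
    moreover have "(if t \<le> k then t else Suc t, p) \<in> {0..Suc N} \<times> {1..n}"
      using x tp by auto
    ultimately show "x \<in> merge_levels k ` ({0..Suc N} \<times> {1..n})" by blast
  qed
qed

lemma closure_edges_skip_vertical_map:
  assumes k: "k \<le> N" and vertical: "\<not> snd (f k)" and ab: "(a, b) \<in> closure_edges n (Suc N) f"
  shows "merge_levels k a = merge_levels k b
    \<or> (merge_levels k a, merge_levels k b) \<in> closure_edges n N (skip_letter k f)"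
  using ab
proof (cases rule: closure_edgesE)
  case (wrap p)
  then show ?thesis using k by (simp add: merge_levels_def closure_edges_wrap)
next
  case (strand t p)
  consider "t = k" | "t < k" | "k < t" by linarith
  then show ?thesis
  proof cases
    case 1
    then show ?thesis using strand by (simp add: merge_levels_def)
  next
    case 2
    then show ?thesis using strand k by (simp add: merge_levels_def skip_letter_def closure_edges_strand)
  next
    case 3
    have "((t - 1, p), (Suc (t - 1), p)) \<in> closure_edges n N (skip_letter k f)"
      by (rule closure_edges_strand) (use strand 3 in \<open>auto simp: skip_letter_def\<close>)
    then show ?thesis using strand 3 by (simp add: merge_levels_def)
  qed
next
  case (below t)
  then have "t \<noteq> k" using vertical by auto
  then consider "t < k" | "k < t" by linarith
  then show ?thesis
  proof cases
    case 1
    then show ?thesis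
      using below k closure_edges_below[of t N "skip_letter k f"]
      by (simp add: merge_levels_def skip_letter_def)
  next
    case 2
    have "((t - 1, fst (f t)), (t - 1, Suc (fst (f t)))) \<in> closure_edges n N (skip_letter k f)"
      using closure_edges_below[of "t - 1" N "skip_letter k f", unfolded skip_letter_pred[OF 2]]
        below 2 by simp
    then show ?thesis using below 2 by (simp add: merge_levels_def)
  qed
next
  case (above t)
  then have "t \<noteq> k" using vertical by auto
  then consider "t < k" | "k < t" by linarith
  then show ?thesis
  proof cases
    case 1
    then show ?thesis
      using above k closure_edges_above[of t N "skip_letter k f"]
      by (simp add: merge_levels_def skip_letter_def)
  next
    case 2
    have "((t, fst (f t)), (t, Suc (fst (f t)))) \<in> closure_edges n N (skip_letter k f)"
      using closure_edges_above[of "t - 1" N "skip_letter k f", unfolded skip_letter_pred[OF 2]]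
        above 2 by simp
    then show ?thesis using above 2 by (simp add: merge_levels_def)
  qed
qed

lemma closure_edges_skip_vertical_lift:
  assumes k: "k \<le> N" and cd: "(c, d) \<in> closure_edges n N (skip_letter k f)"
  shows "\<exists>a b. (a, b) \<in> closure_edges n (Suc N) f \<and> merge_levels k a = c \<and> merge_levels k b = d"
  using cd
proof (cases rule: closure_edgesE)
  case (wrap p)
  then show ?thesis using k
    by (intro exI[of _ "(Suc N, p)"] exI[of _ "(0, p)"]) (simp add: merge_levels_def closure_edges_wrap)
next
  case (strand t p)
  show ?thesis
  proof (cases "t < k")
    case True
    then show ?thesis using strand
      by (intro exI[of _ "(t, p)"] exI[of _ "(Suc t, p)"])
        (simp add: merge_levels_def skip_letter_def closure_edges_strand)
  next
    case False
    then show ?thesis using strand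
      by (intro exI[of _ "(Suc t, p)"] exI[of _ "(Suc (Suc t), p)"])
        (simp add: merge_levels_def skip_letter_def closure_edges_strand)
  qed
next
  case (below t)
  show ?thesis
  proof (cases "t < k")
    case True
    then show ?thesis using below closure_edges_below[of t "Suc N" f]
      by (intro exI[of _ "(t, fst (f t))"] exI[of _ "(t, Suc (fst (f t)))"])
        (simp add: merge_levels_def skip_letter_def)
  next
    case False
    then show ?thesis using below closure_edges_below[of "Suc t" "Suc N" f]
      by (intro exI[of _ "(Suc t, fst (f (Suc t)))"] exI[of _ "(Suc t, Suc (fst (f (Suc t))))"])
        (simp add: merge_levels_def skip_letter_def)
  qed
next
  case (above t)
  show ?thesis
  proof (cases "t < k")
    case True
    then show ?thesis using above closure_edges_above[of t "Suc N" f]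
      by (intro exI[of _ "(Suc t, fst (f t))"] exI[of _ "(Suc t, Suc (fst (f t)))"])
        (simp add: merge_levels_def skip_letter_def)
  next
    case False
    then show ?thesis using above closure_edges_above[of "Suc t" "Suc N" f]
      by (intro exI[of _ "(Suc (Suc t), fst (f (Suc t)))"] exI[of _ "(Suc (Suc t), Suc (fst (f (Suc t))))"])
        (simp add: merge_levels_def skip_letter_def)
  qed
qed

lemma merge_levels_fibres_connected:
  assumes "k \<le> N" and "\<not> snd (f k)"
    and "a \<in> {0..Suc N} \<times> {1..n}" "b \<in> {0..Suc N} \<times> {1..n}"
    and "merge_levels k a = merge_levels k b"
  shows "(a, b) \<in> (closure_edges n (Suc N) f \<union> (closure_edges n (Suc N) f)\<inverse>)\<^sup>*"
proof -
  obtain t p t' where ab: "a = (t, p)" "b = (t', p)"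
    using assms(5) by (cases a, cases b) (auto simp: merge_levels_def)
  have "((k, p), (Suc k, p)) \<in> closure_edges n (Suc N) f"
    using assms ab by (intro closure_edges_strand) auto
  moreover have "t = t' \<or> (t = k \<and> t' = Suc k) \<or> (t' = k \<and> t = Suc k)"
    using assms(5) ab by (auto simp: merge_levels_def split: if_splits)
  ultimately show ?thesis using ab by auto
qed

lemma closure_loops_skip_vertical:
  assumes k: "k \<le> N" and vertical: "\<not> snd (f k)"
    and range: "\<forall>t<Suc N. 1 \<le> fst (f t) \<and> fst (f t) < n"
  shows "closure_loops n (Suc N) f = closure_loops n N (skip_letter k f)"
  unfolding closure_loops_def
proof (rule card_components_eq_if_collapse)
  show "merge_levels k ` ({0..Suc N} \<times> {1..n}) = {0..N} \<times> {1..n}"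
    using k by (rule merge_levels_image)
  show "closure_edges n (Suc N) f \<subseteq> ({0..Suc N} \<times> {1..n}) \<times> ({0..Suc N} \<times> {1..n})"
    using range by (rule closure_edges_subset)
qed (use closure_edges_skip_vertical_map[where f = f, OF k vertical]
       closure_edges_skip_vertical_lift[OF k]
       merge_levels_fibres_connected[where f = f, OF k vertical] in blast)+

text \<open>Two consecutive horizontal smoothings of the same generator enclose a small loop; the point
  (0, 0), which lies outside the diagram, stands for that loop.\<close>

definition collapse_kink :: "nat \<Rightarrow> nat \<Rightarrow> nat \<times> nat \<Rightarrow> nat \<times> nat" where
  "collapse_kink k i x =
     (if fst x = Suc k \<and> (snd x = i \<or> snd x = Suc i) then (0, 0) else merge_levels (Suc k) x)"

lemma collapse_kink_image:
  assumes "Suc k \<le> N" "1 \<le> i" "i < n"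
  shows "collapse_kink k i ` ({0..Suc N} \<times> {1..n}) = insert (0, 0) ({0..N} \<times> {1..n})"
proof
  show "collapse_kink k i ` ({0..Suc N} \<times> {1..n}) \<subseteq> insert (0, 0) ({0..N} \<times> {1..n})"
    using assms by (auto simp: collapse_kink_def merge_levels_def split: if_splits)
  show "insert (0, 0) ({0..N} \<times> {1..n}) \<subseteq> collapse_kink k i ` ({0..Suc N} \<times> {1..n})"
  proof
    fix x assume x: "x \<in> insert (0, 0) ({0..N} \<times> {1..n})"
    obtain t p where tp: "x = (t, p)" by fastforce
    define y where "y = (if x = (0, 0) then (Suc k, i) else if t \<le> k then (t, p) else (Suc t, p))"
    have "y \<in> {0..Suc N} \<times> {1..n}" "collapse_kink k i y = x"
      using assms x tp by (auto simp: y_def collapse_kink_def merge_levels_def)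
    then show "x \<in> collapse_kink k i ` ({0..Suc N} \<times> {1..n})" by (metis rev_image_eqI)
  qed
qed

lemma closure_edges_kink_map:
  assumes k: "Suc k \<le> N" and kink: "f k = (i, True)" "f (Suc k) = (i, True)"
    and ab: "(a, b) \<in> closure_edges n (Suc N) f"
  shows "collapse_kink k i a = collapse_kink k i b
    \<or> (collapse_kink k i a, collapse_kink k i b) \<in> closure_edges n N (skip_letter (Suc k) f)"
  using ab
proof (cases rule: closure_edgesE)
  case (wrap p)
  then show ?thesis using k by (simp add: collapse_kink_def merge_levels_def closure_edges_wrap)
next
  case (strand t p)
  consider "t \<le> k" | "t = Suc k" | "Suc k < t" by linarith
  then show ?thesis
  proof cases
    case 1
    then show ?thesis using strand kink k
      by (auto simp: collapse_kink_def merge_levels_def skip_letter_def intro!: closure_edges_strand)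
  next
    case 2
    then show ?thesis using strand kink by (simp add: collapse_kink_def merge_levels_def)
  next
    case 3
    have "((t - 1, p), (t, p)) \<in> closure_edges n N (skip_letter (Suc k) f)"
      using closure_edges_strand[of "t - 1" N p n "skip_letter (Suc k) f", unfolded skip_letter_pred[OF 3]]
        strand 3 by simp
    then show ?thesis using strand 3 by (simp add: collapse_kink_def merge_levels_def)
  qed
next
  case (below t)
  consider "t \<le> k" | "t = Suc k" | "Suc k < t" by linarith
  then show ?thesis
  proof cases
    case 1
    then show ?thesis using below k closure_edges_below[of t N "skip_letter (Suc k) f"]
      by (simp add: collapse_kink_def merge_levels_def skip_letter_def)
  next
    case 2
    then show ?thesis using below kink by (simp add: collapse_kink_def)
  next
    case 3
    have "((t - 1, fst (f t)), (t - 1, Suc (fst (f t)))) \<in> closure_edges n N (skip_letter (Suc k) f)"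
      using closure_edges_below[of "t - 1" N "skip_letter (Suc k) f", unfolded skip_letter_pred[OF 3]]
        below 3 by simp
    then show ?thesis using below 3 by (simp add: collapse_kink_def merge_levels_def)
  qed
next
  case (above t)
  consider "t < k" | "t = k" | "t = Suc k" | "Suc k < t" by linarith
  then show ?thesis
  proof cases
    case 1
    then show ?thesis using above k closure_edges_above[of t N "skip_letter (Suc k) f"]
      by (simp add: collapse_kink_def merge_levels_def skip_letter_def)
  next
    case 2
    then show ?thesis using above kink by (simp add: collapse_kink_def)
  next
    case 3
    then show ?thesis using above kink k closure_edges_above[of k N "skip_letter (Suc k) f"]
      by (simp add: collapse_kink_def merge_levels_def skip_letter_def)
  next
    case 4
    have "((t, fst (f t)), (t, Suc (fst (f t)))) \<in> closure_edges n N (skip_letter (Suc k) f)"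
      using closure_edges_above[of "t - 1" N "skip_letter (Suc k) f", unfolded skip_letter_pred[OF 4]]
        above 4 by simp
    then show ?thesis using above 4 by (simp add: collapse_kink_def merge_levels_def)
  qed
qed

lemma closure_edges_kink_lift:
  assumes k: "Suc k \<le> N" and kink: "f k = (i, True)" "f (Suc k) = (i, True)"
    and cd: "(c, d) \<in> closure_edges n N (skip_letter (Suc k) f)"
  shows "\<exists>a b. (a, b) \<in> closure_edges n (Suc N) f \<and> collapse_kink k i a = c \<and> collapse_kink k i b = d"
  using cd
proof (cases rule: closure_edgesE)
  case (wrap p)
  then show ?thesis using k
    by (intro exI[of _ "(Suc N, p)"] exI[of _ "(0, p)"])
      (simp add: collapse_kink_def merge_levels_def closure_edges_wrap)
next
  case (strand t p)
  show ?thesis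
  proof (cases "t \<le> k")
    case True
    then show ?thesis using strand kink
      by (intro exI[of _ "(t, p)"] exI[of _ "(Suc t, p)"])
        (auto simp: collapse_kink_def merge_levels_def skip_letter_def intro!: closure_edges_strand)
  next
    case False
    then show ?thesis using strand
      by (intro exI[of _ "(Suc t, p)"] exI[of _ "(Suc (Suc t), p)"])
        (simp add: collapse_kink_def merge_levels_def skip_letter_def closure_edges_strand)
  qed
next
  case (below t)
  show ?thesis
  proof (cases "t \<le> k")
    case True
    then show ?thesis using below closure_edges_below[of t "Suc N" f]
      by (intro exI[of _ "(t, fst (f t))"] exI[of _ "(t, Suc (fst (f t)))"])
        (simp add: collapse_kink_def merge_levels_def skip_letter_def)
  next
    case False
    then show ?thesis using below closure_edges_below[of "Suc t" "Suc N" f]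
      by (intro exI[of _ "(Suc t, fst (f (Suc t)))"] exI[of _ "(Suc t, Suc (fst (f (Suc t))))"])
        (simp add: collapse_kink_def merge_levels_def skip_letter_def)
  qed
next
  case (above t)
  consider "t < k" | "t = k" | "k < t" by linarith
  then show ?thesis
  proof cases
    case 1
    then show ?thesis using above closure_edges_above[of t "Suc N" f]
      by (intro exI[of _ "(Suc t, fst (f t))"] exI[of _ "(Suc t, Suc (fst (f t)))"])
        (simp add: collapse_kink_def merge_levels_def skip_letter_def)
  next
    case 2
    then show ?thesis using above kink k closure_edges_above[of "Suc k" "Suc N" f]
      by (intro exI[of _ "(Suc (Suc k), i)"] exI[of _ "(Suc (Suc k), Suc i)"])
        (simp add: collapse_kink_def merge_levels_def skip_letter_def)
  next
    case 3
    then show ?thesis using above closure_edges_above[of "Suc t" "Suc N" f]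
      by (intro exI[of _ "(Suc (Suc t), fst (f (Suc t)))"] exI[of _ "(Suc (Suc t), Suc (fst (f (Suc t))))"])
        (simp add: collapse_kink_def merge_levels_def skip_letter_def)
  qed
qed

lemma collapse_kink_fibres_connected:
  assumes k: "Suc k \<le> N" and kink: "f (Suc k) = (i, True)"
    and a: "a \<in> {0..Suc N} \<times> {1..n}" and b: "b \<in> {0..Suc N} \<times> {1..n}"
    and ab: "collapse_kink k i a = collapse_kink k i b"
  shows "(a, b) \<in> (closure_edges n (Suc N) f \<union> (closure_edges n (Suc N) f)\<inverse>)\<^sup>*"
proof -
  let ?E = "closure_edges n (Suc N) f"
  obtain t p t' p' where tp: "a = (t, p)" "b = (t', p')" by fastforce
  have strand: "((Suc k, q), (Suc (Suc k), q)) \<in> ?E" if "q \<noteq> i" "q \<noteq> Suc i" "1 \<le> q" "q \<le> n" for q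
    using that k kink by (intro closure_edges_strand) auto
  have loop: "((Suc k, i), (Suc k, Suc i)) \<in> ?E"
    using closure_edges_below[of "Suc k" "Suc N" f] k kink by simp
  have "a = b
      \<or> (p = p' \<and> p \<noteq> i \<and> p \<noteq> Suc i \<and> t = Suc k \<and> t' = Suc (Suc k))
      \<or> (p = p' \<and> p \<noteq> i \<and> p \<noteq> Suc i \<and> t' = Suc k \<and> t = Suc (Suc k))
      \<or> (t = Suc k \<and> t' = Suc k \<and> (p = i \<or> p = Suc i) \<and> (p' = i \<or> p' = Suc i))"
    using ab tp a b by (auto simp: collapse_kink_def merge_levels_def split: if_splits)
  then show ?thesis
    using tp a b strand[of p] loop by auto
qed

lemma closure_loops_kink:
  assumes k: "Suc k \<le> N" and kink: "f k = (i, True)" "f (Suc k) = (i, True)"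
    and range: "\<forall>t<Suc N. 1 \<le> fst (f t) \<and> fst (f t) < n"
  shows "closure_loops n (Suc N) f = Suc (closure_loops n N (skip_letter (Suc k) f))"
proof -
  have i: "1 \<le> i" "i < n"
    using range[rule_format, of k] k kink by auto
  let ?B = "{0..N} \<times> {1..n}" and ?F = "closure_edges n N (skip_letter (Suc k) f)"
  have "closure_loops n (Suc N) f = card (insert (0, 0) ?B // (?F \<union> ?F\<inverse>)\<^sup>*)"
    unfolding closure_loops_def
  proof (rule card_components_eq_if_collapse)
    show "collapse_kink k i ` ({0..Suc N} \<times> {1..n}) = insert (0, 0) ?B"
      using k i by (rule collapse_kink_image)
    show "closure_edges n (Suc N) f \<subseteq> ({0..Suc N} \<times> {1..n}) \<times> ({0..Suc N} \<times> {1..n})"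
      using range by (rule closure_edges_subset)
  qed (use closure_edges_kink_map[where f = f, OF k kink]
         closure_edges_kink_lift[where f = f, OF k kink]
         collapse_kink_fibres_connected[where f = f, OF k kink(2)] in blast)+
  also have "\<dots> = Suc (card (?B // (?F \<union> ?F\<inverse>)\<^sup>*))"
  proof (rule card_components_insert_isolated)
    have "\<forall>t<N. 1 \<le> fst (skip_letter (Suc k) f t) \<and> fst (skip_letter (Suc k) f t) < n"
      using range by (simp add: skip_letter_def)
    then have "?F \<subseteq> ?B \<times> ?B"
      by (rule closure_edges_subset)
    then show "(c, d) \<in> ?F \<Longrightarrow> c \<noteq> (0, 0) \<and> d \<noteq> (0, 0)" for c d
      by auto
  qed simp_all
  finally show ?thesis
    unfolding closure_loops_def .
qed

section \<open>The state sum and its skein expansion\<close>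

text \<open>\<open>fls_X_intpow\<close> is an abbreviation for a shift; wrapping it in a constant keeps the
  simplifier from unfolding powers of \<open>s\<close>.\<close>

definition s_pow :: "int \<Rightarrow> int fls" where
  "s_pow k = fls_X_intpow k"

lemma s_pow_mult: "s_pow a * s_pow b = s_pow (a + b)"
  unfolding s_pow_def by (rule fls_X_intpow_times_fls_X_intpow)

lemma s_pow_0 [simp]: "s_pow 0 = 1"
  by (simp add: s_pow_def)

lemma fls_X_eq_s_pow: "fls_X = s_pow 1"
  by (simp add: s_pow_def fls_X_conv_shift_1)

lemma fls_X_inv_eq_s_pow: "fls_X_inv = s_pow (-1)"
  by (simp add: s_pow_def fls_X_inv_conv_shift_1)

lemma fls_nth_s_pow_mult: "fls_nth (s_pow a * f) d = fls_nth f (d - a)"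
  by (simp add: s_pow_def fls_X_intpow_times_conv_shift)

definition loop_weight :: "int fls" where
  "loop_weight = - s_pow 1 - s_pow (-1)"

definition bool_sign :: "bool \<Rightarrow> int" where
  "bool_sign b = (if b then 1 else -1)"

lemma bool_sign_simps [simp]: "bool_sign True = 1" "bool_sign False = -1"
  by (simp_all add: bool_sign_def)

definition smoothing_exp :: "braid_word \<Rightarrow> bool list \<Rightarrow> int" where
  "smoothing_exp w bs = sum_list (map2 (\<lambda>l c. bool_sign c * bool_sign (snd l)) w bs)"

definition state_exp :: "braid_word \<Rightarrow> bool list \<Rightarrow> int" where
  "state_exp w bs = smoothing_exp w bs - 3 * writhe w"

definition state_tokens :: "braid_word \<Rightarrow> bool list \<Rightarrow> nat \<Rightarrow> nat \<times> bool" where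
  "state_tokens w bs t = (fst (w ! t), bs ! t)"

definition state_term :: "nat \<Rightarrow> braid_word \<Rightarrow> bool list \<Rightarrow> int fls" where
  "state_term n w bs =
     s_pow (state_exp w bs div 2) * loop_weight ^ (closure_loops n (length w) (state_tokens w bs) - 1)"

definition state_sum :: "nat \<Rightarrow> braid_word \<Rightarrow> int fls" where
  "state_sum n w = (\<Sum>bs | length bs = length w. state_term n w bs)"

lemma jones_eq_state_sum: "jones n w = (-1) ^ nat \<bar>writhe w\<bar> * state_sum n w"
proof -
  let ?N = "length w"
  have "state_sum n w = (\<Sum>S\<in>Pow {..<?N}. s_pow ((state_A_exp w S - 3 * writhe w) div 2)
      * (- fls_X - fls_X_inv) ^ (state_loops n w S - 1))"
    unfolding state_sum_def
  proof (rule sum.reindex_bij_witness[where i = "\<lambda>S. map (\<lambda>t. t \<in> S) [0..<?N]"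
        and j = "\<lambda>bs. {t. t < ?N \<and> bs ! t}"])
    fix bs :: "bool list" assume bs: "bs \<in> {bs. length bs = ?N}"
    then show "map (\<lambda>t. t \<in> {t. t < ?N \<and> bs ! t}) [0..<?N] = bs"
      by (intro nth_equalityI) auto
    show "{t. t < ?N \<and> bs ! t} \<in> Pow {..<?N}" by auto
    have "state_A_exp w {t. t < ?N \<and> bs ! t} - 3 * writhe w = state_exp w bs"
      using bs by (simp add: state_A_exp_def state_exp_def smoothing_exp_def bool_sign_def
          sum_list_sum_nth atLeast0LessThan)
    moreover have "state_loops n w {t. t < ?N \<and> bs ! t} = closure_loops n ?N (state_tokens w bs)"
      unfolding state_loops_eq_closure_loops by (rule closure_loops_cong) (simp add: state_tokens_def)
    ultimately show "s_pow ((state_A_exp w {t. t < ?N \<and> bs ! t} - 3 * writhe w) div 2)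
        * (- fls_X - fls_X_inv) ^ (state_loops n w {t. t < ?N \<and> bs ! t} - 1) = state_term n w bs"
      by (simp add: state_term_def loop_weight_def fls_X_eq_s_pow fls_X_inv_eq_s_pow)
  qed auto
  moreover have "jones n w = (-1) ^ nat \<bar>writhe w\<bar> * (\<Sum>S\<in>Pow {..<?N}.
      s_pow ((state_A_exp w S - 3 * writhe w) div 2) * (- fls_X - fls_X_inv) ^ (state_loops n w S - 1))"
    unfolding jones_def s_pow_def sum_distrib_left mult.assoc ..
  ultimately show ?thesis by simp
qed

lemma sum_lists_append:
  fixes F :: "'a list \<Rightarrow> 'b::comm_monoid_add"
  shows "(\<Sum>zs | length zs = a + b. F zs) = (\<Sum>xs | length xs = a. \<Sum>ys | length ys = b. F (xs @ ys))"
proof -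
  have "(\<Sum>zs | length zs = a + b. F zs)
      = (\<Sum>(xs, ys) \<in> {xs. length xs = a} \<times> {ys. length ys = b}. F (xs @ ys))"
    by (rule sum.reindex_bij_witness[where i = "\<lambda>(xs, ys). xs @ ys"
          and j = "\<lambda>zs. (take a zs, drop a zs)"]) auto
  then show ?thesis
    by (simp add: sum.cartesian_product split_def)
qed

lemma sum_bool_lists_Suc:
  fixes F :: "bool list \<Rightarrow> 'b::comm_monoid_add"
  shows "(\<Sum>zs | length zs = Suc b. F zs) = (\<Sum>ys | length ys = b. F (False # ys) + F (True # ys))"
proof -
  let ?Y = "{ys :: bool list. length ys = b}"
  have split: "{zs. length zs = Suc b} = Cons False ` ?Y \<union> Cons True ` ?Y"
    by (auto simp: length_Suc_conv image_iff)
  have "finite ?Y"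
    using finite_lists_length_eq[of "UNIV :: bool set" b] by simp
  then have "(\<Sum>zs | length zs = Suc b. F zs) = sum F (Cons False ` ?Y) + sum F (Cons True ` ?Y)"
    unfolding split by (intro sum.union_disjoint) auto
  also have "\<dots> = (\<Sum>ys \<in> ?Y. F (False # ys)) + (\<Sum>ys \<in> ?Y. F (True # ys))"
    by (simp add: sum.reindex)
  finally show ?thesis
    by (simp add: sum.distrib)
qed

lemma sum_bool_lists_split:
  fixes F :: "bool list \<Rightarrow> 'b::comm_monoid_add"
  shows "(\<Sum>zs | length zs = a + Suc b. F zs)
    = (\<Sum>xs | length xs = a. \<Sum>ys | length ys = b. F (xs @ False # ys) + F (xs @ True # ys))"
  by (simp only: sum_lists_append sum_bool_lists_Suc)

lemma sum_bool_lists_snoc: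
  fixes F :: "bool list \<Rightarrow> 'b::comm_monoid_add"
  shows "(\<Sum>zs | length zs = Suc a. F zs) = (\<Sum>xs | length xs = a. F (xs @ [False]) + F (xs @ [True]))"
proof -
  have "{ys :: bool list. length ys = 0} = {[]}" by auto
  then show ?thesis
    using sum_bool_lists_split[of F a 0] by simp
qed

lemma writhe_eq_sum_list: "writhe w = sum_list (map (\<lambda>l. if snd l then -1 else 1) w)"
  unfolding writhe_def by (simp add: sum_list_sum_nth atLeast0LessThan)

lemma writhe_append: "writhe (u @ v) = writhe u + writhe v"
  by (simp add: writhe_eq_sum_list)

lemma state_exp_insert:
  assumes "length x = length u"
  shows "state_exp (u @ l # v) (x @ c # y)
    = state_exp (u @ v) (x @ y) + (bool_sign c + 3) * bool_sign (snd l)"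
  using assms
  by (simp add: state_exp_def smoothing_exp_def writhe_eq_sum_list bool_sign_def algebra_simps)

lemma state_tokens_range:
  "\<forall>l\<in>set w. 1 \<le> fst l \<and> fst l < n \<Longrightarrow>
    \<forall>t<length w. 1 \<le> fst (state_tokens w bs t) \<and> fst (state_tokens w bs t) < n"
  by (auto simp: state_tokens_def)

lemma skip_letter_state_tokens:
  "length x = length u \<Longrightarrow>
    skip_letter (length u) (state_tokens (u @ l # v) (x @ c # y)) = state_tokens (u @ v) (x @ y)"
  by (auto simp: skip_letter_def state_tokens_def nth_append fun_eq_iff)

lemma state_tokens_letter_sign: "state_tokens (u @ (i, b) # v) = state_tokens (u @ (i, b') # v)"
  by (auto simp: state_tokens_def nth_append nth_Cons fun_eq_iff split: nat.split)

text \<open>\<open>smoothed_state_sum n u i v\<close> is the part of the state sum of \<open>u x_i^(\<plusminus>1) v\<close> in which the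
  middle letter is smoothed horizontally, with that letter's contribution to the exponent of \<open>s\<close>
  removed.\<close>

definition smoothed_term ::
    "nat \<Rightarrow> braid_word \<Rightarrow> nat \<Rightarrow> braid_word \<Rightarrow> bool list \<Rightarrow> bool list \<Rightarrow> int fls" where
  "smoothed_term n u i v x y = s_pow (state_exp (u @ v) (x @ y) div 2)
     * loop_weight ^ (closure_loops n (Suc (length u + length v))
                        (state_tokens (u @ (i, True) # v) (x @ True # y)) - 1)"

definition smoothed_state_sum :: "nat \<Rightarrow> braid_word \<Rightarrow> nat \<Rightarrow> braid_word \<Rightarrow> int fls" where
  "smoothed_state_sum n u i v =
     (\<Sum>x | length x = length u. \<Sum>y | length y = length v. smoothed_term n u i v x y)"

lemma state_term_vertical:
  assumes range: "\<forall>l\<in>set (u @ (i, b) # v). 1 \<le> fst l \<and> fst l < n" and x: "length x = length u"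
  shows "state_term n (u @ (i, b) # v) (x @ False # y)
    = s_pow (bool_sign b) * state_term n (u @ v) (x @ y)"
proof -
  let ?w = "u @ (i, b) # v" and ?bs = "x @ False # y"
  have "state_exp ?w ?bs = state_exp (u @ v) (x @ y) + 2 * bool_sign b"
    using state_exp_insert[OF x] by simp
  moreover have "closure_loops n (length ?w) (state_tokens ?w ?bs)
      = closure_loops n (length (u @ v)) (state_tokens (u @ v) (x @ y))"
    using closure_loops_skip_vertical[of "length u" "length u + length v" "state_tokens ?w ?bs" n]
      state_tokens_range[OF range, of ?bs] x
    by (simp add: skip_letter_state_tokens) (simp add: state_tokens_def nth_append)
  ultimately show ?thesis
    by (simp add: state_term_def s_pow_mult mult.assoc)
qed

lemma state_term_horizontal:
  assumes x: "length x = length u"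
  shows "state_term n (u @ (i, b) # v) (x @ True # y)
    = s_pow (2 * bool_sign b) * smoothed_term n u i v x y"
proof -
  have "state_exp (u @ (i, b) # v) (x @ True # y) div 2 = state_exp (u @ v) (x @ y) div 2 + 2 * bool_sign b"
    using state_exp_insert[OF x] by simp
  then show ?thesis
    unfolding state_term_def smoothed_term_def state_tokens_letter_sign[of u i b v True]
    by (simp add: s_pow_mult mult.assoc add.commute)
qed

lemma state_sum_expand:
  assumes "\<forall>l\<in>set (u @ (i, b) # v). 1 \<le> fst l \<and> fst l < n"
  shows "state_sum n (u @ (i, b) # v)
    = s_pow (bool_sign b) * state_sum n (u @ v) + s_pow (2 * bool_sign b) * smoothed_state_sum n u i v"
proof -
  have "state_sum n (u @ (i, b) # v) = (\<Sum>x | length x = length u. \<Sum>y | length y = length v.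
      state_term n (u @ (i, b) # v) (x @ False # y) + state_term n (u @ (i, b) # v) (x @ True # y))"
    unfolding state_sum_def using sum_bool_lists_split[of _ "length u" "length v"] by simp
  also have "\<dots> = (\<Sum>x | length x = length u. \<Sum>y | length y = length v.
      s_pow (bool_sign b) * state_term n (u @ v) (x @ y)
      + s_pow (2 * bool_sign b) * smoothed_term n u i v x y)"
    using assms by (intro sum.cong refl) (simp add: state_term_vertical state_term_horizontal)
  also have "\<dots>
      = s_pow (bool_sign b) * state_sum n (u @ v) + s_pow (2 * bool_sign b) * smoothed_state_sum n u i v"
    unfolding state_sum_def smoothed_state_sum_def
    by (simp add: sum_lists_append sum.distrib sum_distrib_left)
  finally show ?thesis .
qed

lemma smoothed_term_snoc_vertical:
  assumes range: "\<forall>l\<in>set (u @ v). 1 \<le> fst l \<and> fst l < n" "1 \<le> i" "i < n" and x: "length x = length u"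
  shows "smoothed_term n (u @ [(i, b)]) i v (x @ [False]) y
    = s_pow (bool_sign b) * smoothed_term n u i v x y"
proof -
  let ?T = "state_tokens (u @ (i, b) # (i, True) # v) (x @ False # True # y)"
  have "state_exp (u @ (i, b) # v) (x @ False # y) = state_exp (u @ v) (x @ y) + 2 * bool_sign b"
    using state_exp_insert[OF x] by simp
  moreover have "closure_loops n (Suc (Suc (length u + length v))) ?T
      = closure_loops n (Suc (length u + length v)) (state_tokens (u @ (i, True) # v) (x @ True # y))"
    using closure_loops_skip_vertical[of "length u" "Suc (length u + length v)" ?T n]
      state_tokens_range[of "u @ (i, b) # (i, True) # v" n "x @ False # True # y"] range x
    by (simp add: skip_letter_state_tokens) (simp add: state_tokens_def nth_append)
  ultimately show ?thesis
    using x by (simp add: smoothed_term_def s_pow_mult mult.assoc)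
qed

lemma smoothed_term_snoc_horizontal:
  assumes range: "\<forall>l\<in>set (u @ v). 1 \<le> fst l \<and> fst l < n" "1 \<le> i" "i < n" and x: "length x = length u"
  shows "smoothed_term n (u @ [(i, b)]) i v (x @ [True]) y
    = s_pow (2 * bool_sign b) * loop_weight * smoothed_term n u i v x y"
proof -
  let ?T = "state_tokens (u @ (i, b) # (i, True) # v) (x @ True # True # y)"
  define L where
    "L = closure_loops n (Suc (length u + length v)) (state_tokens (u @ (i, True) # v) (x @ True # y))"
  have "state_exp (u @ (i, b) # v) (x @ True # y) div 2 = state_exp (u @ v) (x @ y) div 2 + 2 * bool_sign b"
    using state_exp_insert[OF x] by simp
  moreover have "skip_letter (Suc (length u)) ?T = state_tokens (u @ (i, True) # v) (x @ True # y)"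
    using skip_letter_state_tokens[of "x @ [True]" "u @ [(i, b)]" "(i, True)" v True y] x
    by (simp add: state_tokens_letter_sign[of u i b v True])
  then have "closure_loops n (Suc (Suc (length u + length v))) ?T = Suc L"
    using closure_loops_kink[of "length u" "Suc (length u + length v)" ?T i n]
      state_tokens_range[of "u @ (i, b) # (i, True) # v" n "x @ True # True # y"] range x
    by (simp add: L_def state_tokens_def nth_append)
  moreover have "loop_weight ^ (Suc L - 1) = loop_weight * loop_weight ^ (L - 1)"
  proof -
    have "1 \<le> L"
      unfolding L_def using range by (intro closure_loops_pos) simp
    then show ?thesis by (cases L) auto
  qed
  ultimately show ?thesis
    using x unfolding smoothed_term_def L_def[symmetric]
    by (simp add: s_pow_mult mult.assoc add.commute)
qed

lemma s_pow_loop_weight_kink: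
  "c = 1 \<or> c = -1 \<Longrightarrow> s_pow c + s_pow (2 * c) * loop_weight = - s_pow (3 * c)"
  by (auto simp: loop_weight_def algebra_simps s_pow_mult)

lemma smoothed_state_sum_kink:
  assumes "\<forall>l\<in>set (u @ v). 1 \<le> fst l \<and> fst l < n" "1 \<le> i" "i < n"
  shows "smoothed_state_sum n (u @ [(i, b)]) i v
    = - s_pow (3 * bool_sign b) * smoothed_state_sum n u i v"
proof -
  have "smoothed_state_sum n (u @ [(i, b)]) i v = (\<Sum>x | length x = length u. \<Sum>y | length y = length v.
      smoothed_term n (u @ [(i, b)]) i v (x @ [False]) y
      + smoothed_term n (u @ [(i, b)]) i v (x @ [True]) y)"
    unfolding smoothed_state_sum_def by (simp add: sum_bool_lists_snoc sum.distrib)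
  also have "\<dots> = (\<Sum>x | length x = length u. \<Sum>y | length y = length v.
      (s_pow (bool_sign b) + s_pow (2 * bool_sign b) * loop_weight) * smoothed_term n u i v x y)"
    using assms by (intro sum.cong refl)
      (simp add: smoothed_term_snoc_vertical smoothed_term_snoc_horizontal distrib_right)
  also have "s_pow (bool_sign b) + s_pow (2 * bool_sign b) * loop_weight = - s_pow (3 * bool_sign b)"
    by (rule s_pow_loop_weight_kink) (simp add: bool_sign_def)
  finally show ?thesis
    by (simp add: smoothed_state_sum_def sum_distrib_left)
qed

lemma state_sum_double_letter:
  assumes range: "\<forall>l\<in>set (P @ Q). 1 \<le> fst l \<and> fst l < n" and i: "1 \<le> i" "i < n"
  shows "state_sum n (P @ (i, b) # (i, b) # Q)
    = (s_pow (bool_sign b) - s_pow (3 * bool_sign b)) * state_sum n (P @ (i, b) # Q)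
      + s_pow (4 * bool_sign b) * state_sum n (P @ Q)"
proof -
  let ?c = "bool_sign b"
  let ?J2 = "state_sum n (P @ (i, b) # (i, b) # Q)" and ?J1 = "state_sum n (P @ (i, b) # Q)"
    and ?J0 = "state_sum n (P @ Q)" and ?E = "smoothed_state_sum n P i Q"
  have J2: "?J2 = s_pow ?c * ?J1 - s_pow (5 * ?c) * ?E"
  proof -
    have "?J2 = s_pow ?c * ?J1 + s_pow (2 * ?c) * smoothed_state_sum n (P @ [(i, b)]) i Q"
      using state_sum_expand[of "P @ [(i, b)]" i b Q n] range i by simp
    also have "smoothed_state_sum n (P @ [(i, b)]) i Q = - s_pow (3 * ?c) * ?E"
      using smoothed_state_sum_kink[OF range i] .
    finally show ?thesis
      by (simp add: mult.assoc[symmetric] s_pow_mult)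
  qed
  have J1: "s_pow (3 * ?c) * ?J1 = s_pow (4 * ?c) * ?J0 + s_pow (5 * ?c) * ?E"
    using state_sum_expand[of P i b Q n] range i
    by (simp add: distrib_left mult.assoc[symmetric] s_pow_mult)
  have "s_pow (5 * ?c) * ?E = s_pow (3 * ?c) * ?J1 - s_pow (4 * ?c) * ?J0"
    unfolding J1 by simp
  then show ?thesis
    unfolding J2 by (simp add: algebra_simps)
qed

lemma state_sum_inverse_letter:
  assumes range: "\<forall>l\<in>set (P @ Q). 1 \<le> fst l \<and> fst l < n" and i: "1 \<le> i" "i < n"
  shows "state_sum n (P @ (i, True) # Q)
    = (s_pow 1 - s_pow 3) * state_sum n (P @ Q) + s_pow 4 * state_sum n (P @ (i, False) # Q)"
proof -
  have pos: "state_sum n (P @ (i, True) # Q)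
      = s_pow 1 * state_sum n (P @ Q) + s_pow 2 * smoothed_state_sum n P i Q"
    using state_sum_expand[of P i True Q n] range i by (simp add: bool_sign_def)
  have "s_pow 4 * state_sum n (P @ (i, False) # Q)
      = s_pow 3 * state_sum n (P @ Q) + s_pow 2 * smoothed_state_sum n P i Q"
    using state_sum_expand[of P i False Q n] range i
    by (simp add: bool_sign_def distrib_left mult.assoc[symmetric] s_pow_mult)
  then show ?thesis
    unfolding pos by (simp add: algebra_simps)
qed

section \<open>The skein recurrence in the exponent\<close>

lemma gen_power_add_1_nonneg: "0 \<le> e \<Longrightarrow> gen_power i (e + 1) = gen_power i e @ [(i, True)]"
proof -
  assume "0 \<le> e"
  then have "nat (e + 1) = Suc (nat e)" by simp
  with \<open>0 \<le> e\<close> show ?thesis by (simp add: gen_power_def replicate_append_same)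
qed

lemma gen_power_neg: "e < 0 \<Longrightarrow> gen_power i e = gen_power i (e + 1) @ [(i, False)]"
proof -
  assume "e < 0"
  then have "nat (- e) = Suc (nat (- (e + 1)))" by simp
  with \<open>e < 0\<close> show ?thesis by (simp add: gen_power_def replicate_append_same)
qed

lemma fst_set_gen_power: "l \<in> set (gen_power i e) \<Longrightarrow> fst l = i"
  by (auto simp: gen_power_def split: if_splits)

lemma writhe_gen_power: "writhe (gen_power i e) = - e"
  by (simp add: writhe_eq_sum_list gen_power_def sum_list_replicate)

lemma state_sum_power_skein:
  assumes range: "\<forall>l\<in>set (P @ Q). 1 \<le> fst l \<and> fst l < n" and i: "1 \<le> i" "i < n"
  shows "state_sum n (P @ gen_power i (e + 2) @ Q)
    = (s_pow 1 - s_pow 3) * state_sum n (P @ gen_power i (e + 1) @ Q)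
      + s_pow 4 * state_sum n (P @ gen_power i e @ Q)"
proof -
  have range': "\<forall>l\<in>set ((P @ gen_power i f) @ Q). 1 \<le> fst l \<and> fst l < n" for f
    using range i by (auto dest: fst_set_gen_power)
  consider "0 \<le> e" | "e \<le> -2" | "e = -1" by linarith
  then show ?thesis
  proof cases
    case 1
    then have g1: "gen_power i (e + 1) = gen_power i e @ [(i, True)]"
      by (rule gen_power_add_1_nonneg)
    moreover have "gen_power i (e + 2) = gen_power i e @ [(i, True), (i, True)]"
      using gen_power_add_1_nonneg[of "e + 1" i] 1 unfolding g1 by (simp add: add.assoc)
    ultimately show ?thesis
      using state_sum_double_letter[OF range' i, of e True] by (simp add: bool_sign_def)
  next
    case 2
    have "e + 1 + 1 = e + 2" by simp
    then have g1: "gen_power i (e + 1) = gen_power i (e + 2) @ [(i, False)]"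
      using gen_power_neg[of "e + 1" i] 2 by (simp add: add.commute)
    moreover have "gen_power i e = gen_power i (e + 2) @ [(i, False), (i, False)]"
      using gen_power_neg[of e i] 2 unfolding g1 by simp
    moreover
    let ?P = "P @ gen_power i (e + 2)"
    have "s_pow 4 * state_sum n (?P @ (i, False) # (i, False) # Q)
        = (s_pow 3 - s_pow 1) * state_sum n (?P @ (i, False) # Q) + state_sum n (?P @ Q)"
      using state_sum_double_letter[OF range' i, of "e + 2" False]
      by (simp add: bool_sign_def distrib_left right_diff_distrib left_diff_distrib
          mult.assoc[symmetric] s_pow_mult)
    ultimately show ?thesis
      by (simp add: algebra_simps)
  next
    case 3
    then show ?thesis
      using state_sum_inverse_letter[OF range i] by (simp add: gen_power_def)
  qed
qed

lemma neg_one_power_nat_abs_diff_1: "(-1 :: 'a::ring_1) ^ nat \<bar>z - 1\<bar> = - ((-1) ^ nat \<bar>z\<bar>)"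
proof (cases "1 \<le> z")
  case True
  then have "nat \<bar>z\<bar> = Suc (nat \<bar>z - 1\<bar>)" by simp
  then have "(-1 :: 'a) ^ nat \<bar>z\<bar> = - ((-1) ^ nat \<bar>z - 1\<bar>)"
    by (simp only: power_Suc) simp
  then show ?thesis by simp
next
  case False
  then have "nat \<bar>z - 1\<bar> = Suc (nat \<bar>z\<bar>)" by simp
  then show ?thesis
    by (simp only: power_Suc) simp
qed

lemma jones_power_skein:
  assumes "\<forall>l\<in>set (P @ Q). 1 \<le> fst l \<and> fst l < n" "1 \<le> i" "i < n"
  shows "jones n (P @ gen_power i (e + 2) @ Q)
    = s_pow 4 * jones n (P @ gen_power i e @ Q)
      + (s_pow 3 - s_pow 1) * jones n (P @ gen_power i (e + 1) @ Q)"
proof -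
  define c where "c = writhe P + writhe Q"
  have writhe: "writhe (P @ gen_power i f @ Q) = c - f" for f
    by (simp add: writhe_append writhe_gen_power c_def)
  define sg :: "int fls" where "sg = (-1) ^ nat \<bar>c - e\<bar>"
  have sg1: "(-1 :: int fls) ^ nat \<bar>c - (e + 1)\<bar> = - sg"
    using neg_one_power_nat_abs_diff_1[of "c - e"] unfolding sg_def by (simp add: algebra_simps)
  have sg2: "(-1 :: int fls) ^ nat \<bar>c - (e + 2)\<bar> = sg"
    using neg_one_power_nat_abs_diff_1[of "c - (e + 1)", where 'a = "int fls"] sg1
    by (simp add: algebra_simps)
  show ?thesis
    unfolding jones_eq_state_sum writhe sg1 sg2 sg_def[symmetric] state_sum_power_skein[OF assms]
    by (simp add: algebra_simps)
qed

lemma skein_recurrence_support: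
  fixes W :: "nat \<Rightarrow> int fls" and c :: int
  assumes c: "c = 1 \<or> c = -1"
    and rec: "\<And>k. W (Suc (Suc k)) = s_pow (4 * c) * W k + (s_pow (3 * c) - s_pow c) * W (Suc k)"
    and W0: "\<forall>d. c * d < 0 \<longrightarrow> fls_nth (W 0) d = 0"
    and W1: "\<forall>d. c * d < 0 \<longrightarrow> fls_nth (W 1) d = 0"
  shows "\<forall>d. c * d < 0 \<longrightarrow> fls_nth (W k) d = 0"
    and "2 \<le> k \<Longrightarrow> fls_nth (W k) 0 = 0"
proof -
  have coeff: "fls_nth (W (Suc (Suc k))) d
      = fls_nth (W k) (d - 4 * c) + fls_nth (W (Suc k)) (d - 3 * c) - fls_nth (W (Suc k)) (d - c)" for k d
    unfolding rec by (simp add: left_diff_distrib fls_nth_s_pow_mult)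
  have shifted: "c * (d - m * c) = c * d - m" for d m
    using c by (auto simp: algebra_simps)
  show support: "\<forall>d. c * d < 0 \<longrightarrow> fls_nth (W k) d = 0" for k
  proof (induction k rule: induct_nat_012)
    case (ge2 k)
    show ?case
    proof (intro allI impI)
      fix d assume "c * d < 0"
      then have "c * (d - 4 * c) < 0" "c * (d - 3 * c) < 0" "c * (d - 1 * c) < 0"
        unfolding shifted by simp_all
      then show "fls_nth (W (Suc (Suc k))) d = 0"
        using ge2.IH coeff by simp
    qed
  qed (use W0 W1 in simp_all)
  show "fls_nth (W k) 0 = 0" if k: "2 \<le> k"
  proof -
    obtain j where k_eq: "k = Suc (Suc j)"
      using le_Suc_ex[OF k] by auto
    have "c * (0 - 4 * c) < 0" "c * (0 - 3 * c) < 0" "c * (0 - 1 * c) < 0"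
      unfolding shifted by simp_all
    then show ?thesis
      using support coeff unfolding k_eq by simp
  qed
qed

lemma skein_recurrence_poly_in_s:
  fixes V :: "int \<Rightarrow> int fls" and e k :: int
  assumes rec: "\<And>e. V (e + 2) = s_pow 4 * V e + (s_pow 3 - s_pow 1) * V (e + 1)"
    and V0: "is_poly_in_s (V e)" and V1: "is_poly_in_s (V (e + 1))" and k: "2 \<le> k"
  shows "is_poly_in_s (V (e + k)) \<and> V (e + k) \<noteq> 1"
proof -
  let ?W = "\<lambda>m. V (e + int m)"
  have "?W (Suc (Suc m)) = s_pow (4 * 1) * ?W m + (s_pow (3 * 1) - s_pow 1) * ?W (Suc m)" for m
    using rec[of "e + int m"] by (simp add: algebra_simps)
  note support = skein_recurrence_support[of 1 ?W, OF _ this]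
  define m where "m = nat k"
  have m: "k = int m" "2 \<le> m"
    using k by (simp_all add: m_def)
  have "\<forall>d<0. fls_nth (?W m) d = 0" and "fls_nth (?W m) 0 = 0"
    using support[of m] V0 V1 m(2) by (simp_all add: is_poly_in_s_def)
  then show ?thesis
    unfolding is_poly_in_s_def m(1) by auto
qed

lemma skein_recurrence_poly_in_s_inv:
  fixes V :: "int \<Rightarrow> int fls" and e k :: int
  assumes rec: "\<And>e. V (e + 2) = s_pow 4 * V e + (s_pow 3 - s_pow 1) * V (e + 1)"
    and V0: "is_poly_in_s_inv (V e)" and V1: "is_poly_in_s_inv (V (e - 1))" and k: "2 \<le> k"
  shows "is_poly_in_s_inv (V (e - k)) \<and> V (e - k) \<noteq> 1"
proof -
  let ?W = "\<lambda>m. V (e - int m)"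
  have "?W (Suc (Suc m)) = s_pow (4 * -1) * ?W m + (s_pow (3 * -1) - s_pow (-1)) * ?W (Suc m)" for m
  proof -
    have "?W m = s_pow 4 * ?W (Suc (Suc m)) + (s_pow 3 - s_pow 1) * ?W (Suc m)"
      using rec[of "e - int m - 2"] by (simp add: algebra_simps)
    then have "s_pow (-4) * ?W m = ?W (Suc (Suc m)) + (s_pow (-1) - s_pow (-3)) * ?W (Suc m)"
      by (simp add: distrib_left right_diff_distrib left_diff_distrib mult.assoc[symmetric] s_pow_mult)
    then show ?thesis
      by (simp add: algebra_simps)
  qed
  note support = skein_recurrence_support[of "-1" ?W, OF _ this]
  define m where "m = nat k"
  have m: "k = int m" "2 \<le> m"
    using k by (simp_all add: m_def)
  have "\<forall>d>0. fls_nth (?W m) d = 0" and "fls_nth (?W m) 0 = 0"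
    using support[of m] V0 V1 m(2) by (simp_all add: is_poly_in_s_inv_def)
  then show ?thesis
    unfolding is_poly_in_s_inv_def m(1) by auto
qed

lemma word_of_powers_update:
  assumes "j < m"
  shows "word_of_powers m i (a(j := e)) = concat (map (\<lambda>h. gen_power (i h) (a h)) [0..<j])
    @ gen_power (i j) e @ concat (map (\<lambda>h. gen_power (i h) (a h)) [Suc j..<m])"
proof -
  have split: "[0..<m] = [0..<j] @ j # [Suc j..<m]"
    using upt_add_eq_append[of 0 j "m - j"] upt_conv_Cons[of j m] assms by simp
  have prefix: "map (\<lambda>h. gen_power (i h) ((a(j := e)) h)) [0..<j]
      = map (\<lambda>h. gen_power (i h) (a h)) [0..<j]"
    and suffix: "map (\<lambda>h. gen_power (i h) ((a(j := e)) h)) [Suc j..<m]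
      = map (\<lambda>h. gen_power (i h) (a h)) [Suc j..<m]"
    by (auto intro: map_cong)
  show ?thesis
    unfolding word_of_powers_def split map_append list.map concat_append concat.simps prefix suffix
      fun_upd_same ..
qed

theorem proposition5p1:
  fixes n m j :: nat and i :: "nat \<Rightarrow> nat" and a :: "nat \<Rightarrow> int"
    and V :: "int \<Rightarrow> int fls"
  assumes gens: "\<And>h. h < m \<Longrightarrow> 1 \<le> i h \<and> i h < n"
    and j: "j < m"
    and V_def: "\<And>e. V e = jones n (word_of_powers m i (a(j := e)))"
  shows "(\<forall>e k::int. k \<ge> 2 \<and> is_poly_in_s (V e) \<and> is_poly_in_s (V (e + 1))
            \<longrightarrow> is_poly_in_s (V (e + k)) \<and> V (e + k) \<noteq> 1)
       \<and> (\<forall>e k::int. k \<ge> 2 \<and> is_poly_in_s_inv (V e) \<and> is_poly_in_s_inv (V (e - 1))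
            \<longrightarrow> is_poly_in_s_inv (V (e - k)) \<and> V (e - k) \<noteq> 1)"
proof -
  define P where "P = concat (map (\<lambda>h. gen_power (i h) (a h)) [0..<j])"
  define Q where "Q = concat (map (\<lambda>h. gen_power (i h) (a h)) [Suc j..<m])"
  have V_split: "V e = jones n (P @ gen_power (i j) e @ Q)" for e
    unfolding V_def P_def Q_def using word_of_powers_update[OF j] by simp
  have "\<forall>l\<in>set (P @ Q). 1 \<le> fst l \<and> fst l < n"
    unfolding P_def Q_def using gens j by (auto dest!: fst_set_gen_power)
  then have skein: "V (e + 2) = s_pow 4 * V e + (s_pow 3 - s_pow 1) * V (e + 1)" for e
    unfolding V_split using gens j by (intro jones_power_skein) auto
  show ?thesis
    using skein_recurrence_poly_in_s[OF skein] skein_recurrence_poly_in_s_inv[OF skein] by blast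
qed

end
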